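(* Let $K$ be a field of characteristic $0$ and let $m=x_1^{\alpha_1}\cdots x_n^{\alpha_n}$ be a monomial with $\alpha_i\ge 1$ for all $i$. The group of invariants $\{A\in GL_n(K): m(A.x)=m(x)\}$ of $m$ is generated by: (i) the diagonal matrices $\mathrm{diag}(\lambda_1,\ldots,\lambda_n)$ with $\prod_{i=1}^n\lambda_i^{\alpha_i}=1$; (ii) the permutation matrices which map each variable $x_i$ to a variable $x_{\pi(i)}$ with $\alpha_i=\alpha_{\pi(i)}$.
   Context: $m(A.x)$ denotes the polynomial obtained from $m$ by the linear change of variables $x\mapsto Ax$. *)

theory Defs
  imports "HOL-Analysis.Analysis"
begin

definition monomial_fun :: "('n::finite \<Rightarrow> nat) \<Rightarrow> 'a::field ^ 'n \<Rightarrow> 'a" where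
  "monomial_fun \<alpha> x = (\<Prod>i\<in>UNIV. (x $ i) ^ (\<alpha> i))"

definition invariant_group :: "('n::finite \<Rightarrow> nat) \<Rightarrow> ('a::field ^ 'n ^ 'n) set" where
  "invariant_group \<alpha> = {A. invertible A \<and> (\<forall>x. monomial_fun \<alpha> (A *v x) = monomial_fun \<alpha> x)}"

definition diag_mat :: "('n::finite \<Rightarrow> 'a::field) \<Rightarrow> 'a ^ 'n ^ 'n" where
  "diag_mat l = (\<chi> i j. if i = j then l i else 0)"

definition diag_generators :: "('n::finite \<Rightarrow> nat) \<Rightarrow> ('a::field ^ 'n ^ 'n) set" where
  "diag_generators \<alpha> = {diag_mat l | l. (\<Prod>i\<in>UNIV. (l i) ^ (\<alpha> i)) = 1}"

text \<open>Permutation matrix substituting x_i by x_(pi i): (P x)_i = x_(pi i).\<close>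
definition perm_mat :: "('n::finite \<Rightarrow> 'n) \<Rightarrow> 'a::field ^ 'n ^ 'n" where
  "perm_mat \<pi> = (\<chi> i j. if j = \<pi> i then 1 else 0)"

definition perm_generators :: "('n::finite \<Rightarrow> nat) \<Rightarrow> ('a::field ^ 'n ^ 'n) set" where
  "perm_generators \<alpha> = {perm_mat \<pi> | \<pi>. \<pi> permutes UNIV \<and> (\<forall>i. \<alpha> i = \<alpha> (\<pi> i))}"

inductive_set generated_group :: "('a::field ^ 'n::finite ^ 'n) set \<Rightarrow> ('a ^ 'n ^ 'n) set"
  for S where
  gen_one: "mat 1 \<in> generated_group S"
| gen_base: "A \<in> S \<Longrightarrow> A \<in> generated_group S"
| gen_mult: "A \<in> generated_group S \<Longrightarrow> B \<in> generated_group S \<Longrightarrow> A ** B \<in> generated_group S"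
| gen_inv: "A \<in> generated_group S \<Longrightarrow> matrix_inv A \<in> generated_group S"

end

theory Submission
  imports Defs
begin

text \<open>
  An invariant matrix A maps the torus of points with no zero coordinate into itself, since the
  monomial (all exponents positive) vanishes exactly off the torus. Over a field of characteristic 0,
  a linear form with two nonzero coefficients has a zero on the torus, so every row of A has
  exactly one nonzero entry, i.e. A = diag(l) P with P a permutation matrix. Evaluating at
  (1,...,1) gives prod l_i^alpha_i = 1; then m(P x) = m(x) says that permuting the exponents
  does not change the monomial function, and in characteristic 0 the exponents can be read off
  its values, so P respects alpha. Conversely both kinds of generators are invariant, and
  the invariants form a group.
\<close>

lemma matrix_inv_inverse:
  fixes A :: "'a::semiring_1 ^ 'n ^ 'm"
  assumes "invertible A"
  shows "A ** matrix_inv A = mat 1" and "matrix_inv A ** A = mat 1"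
  using someI_ex[OF assms[unfolded invertible_def]] by (simp_all add: matrix_inv_def)

lemma invertible_matrix_inv:
  fixes A :: "'a::semiring_1 ^ 'n ^ 'm"
  assumes "invertible A"
  shows "invertible (matrix_inv A)"
  using matrix_inv_inverse[OF assms] unfolding invertible_def by blast

lemma invertible_row_nonzero:
  fixes A :: "'a::field ^ 'n::finite ^ 'n"
  assumes "invertible A"
  shows "\<exists>j. A $ i $ j \<noteq> 0"
  using assms det_zero_row(2)[of i A] by (force simp: invertible_det_nz row_def vec_eq_iff)

lemma invertible_column_nonzero:
  fixes A :: "'a::field ^ 'n::finite ^ 'n"
  assumes "invertible A"
  shows "\<exists>i. A $ i $ j \<noteq> 0"
  using assms det_zero_column(2)[of j A] by (force simp: invertible_det_nz column_def vec_eq_iff)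

lemma diag_mat_mult_vector: "(diag_mat l :: 'a::field ^ 'n::finite ^ 'n) *v x = (\<chi> i. l i * x $ i)"
  by (simp add: matrix_vector_mult_def diag_mat_def vec_eq_iff if_distrib[of "\<lambda>c. c * _"] cong: if_cong)

lemma perm_mat_mult_vector: "(perm_mat \<sigma> :: 'a::field ^ 'n::finite ^ 'n) *v x = (\<chi> i. x $ \<sigma> i)"
  by (simp add: matrix_vector_mult_def perm_mat_def vec_eq_iff if_distrib[of "\<lambda>c. c * _"] cong: if_cong)

lemma diag_mat_mult:
  "(diag_mat l :: 'a::field ^ 'n::finite ^ 'n) ** diag_mat l' = diag_mat (\<lambda>i. l i * l' i)"
  by (simp add: matrix_eq diag_mat_mult_vector mult.assoc flip: matrix_vector_mul_assoc)

lemma perm_mat_mult: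
  "(perm_mat \<sigma> :: 'a::field ^ 'n::finite ^ 'n) ** perm_mat \<tau> = perm_mat (\<tau> \<circ> \<sigma>)"
  by (simp add: matrix_eq perm_mat_mult_vector flip: matrix_vector_mul_assoc)

lemma invertible_diag_mat:
  assumes "\<And>i. l i \<noteq> 0"
  shows "invertible (diag_mat l :: 'a::field ^ 'n::finite ^ 'n)"
proof -
  have "diag_mat l ** diag_mat (\<lambda>i. inverse (l i)) = (mat 1 :: 'a ^ 'n ^ 'n)"
    by (simp add: diag_mat_mult assms matrix_eq diag_mat_mult_vector)
  then show ?thesis
    by (auto simp: invertible_right_inverse)
qed

lemma invertible_perm_mat:
  assumes "\<sigma> permutes UNIV"
  shows "invertible (perm_mat \<sigma> :: 'a::field ^ 'n::finite ^ 'n)"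
proof -
  have "perm_mat \<sigma> ** perm_mat (inv \<sigma>) = (mat 1 :: 'a ^ 'n ^ 'n)"
    by (simp add: perm_mat_mult permutes_inv_o(2)[OF assms] matrix_eq perm_mat_mult_vector)
  then show ?thesis
    by (auto simp: invertible_right_inverse)
qed

lemma eq_diag_mat_mult_perm_mat:
  fixes A :: "'a::field ^ 'n::finite ^ 'n"
  assumes "\<And>i j. j \<noteq> \<sigma> i \<Longrightarrow> A $ i $ j = 0"
  shows "A = diag_mat (\<lambda>i. A $ i $ \<sigma> i) ** perm_mat \<sigma>"
proof -
  have "(\<Sum>j\<in>UNIV. A $ i $ j * x $ j) = A $ i $ \<sigma> i * x $ \<sigma> i" for x :: "'a ^ 'n" and i
    using assms by (subst sum.remove[of _ "\<sigma> i"]) (auto intro: sum.neutral)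
  then have "A *v x = (\<chi> i. A $ i $ \<sigma> i * x $ \<sigma> i)" for x
    by (simp add: matrix_vector_mult_def vec_eq_iff)
  then show ?thesis
    by (simp add: matrix_eq diag_mat_mult_vector perm_mat_mult_vector flip: matrix_vector_mul_assoc)
qed

lemma monomial_fun_eq_0_iff:
  assumes "\<forall>i. \<alpha> i \<ge> 1"
  shows "monomial_fun \<alpha> x = 0 \<longleftrightarrow> (\<exists>i. x $ i = 0)"
  using assms by (auto simp: monomial_fun_def prod_zero_iff Suc_le_eq)

lemma monomial_fun_1: "monomial_fun \<alpha> 1 = 1"
  by (simp add: monomial_fun_def one_vec_def)

lemma monomial_fun_diag_mat:
  "monomial_fun \<alpha> ((diag_mat l :: 'a::field ^ 'n::finite ^ 'n) *v x)
     = (\<Prod>i\<in>UNIV. l i ^ \<alpha> i) * monomial_fun \<alpha> x"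
  by (simp add: monomial_fun_def diag_mat_mult_vector power_mult_distrib prod.distrib)

lemma monomial_fun_perm_mat:
  assumes "\<sigma> permutes UNIV"
  shows "monomial_fun \<alpha> ((perm_mat \<sigma> :: 'a::field ^ 'n::finite ^ 'n) *v x)
           = monomial_fun (\<alpha> \<circ> inv \<sigma>) x"
proof -
  have "monomial_fun \<alpha> (perm_mat \<sigma> *v x) = (\<Prod>i\<in>UNIV. (x $ \<sigma> i) ^ (\<alpha> \<circ> inv \<sigma>) (\<sigma> i))"
    by (simp add: monomial_fun_def perm_mat_mult_vector permutes_inverses(2)[OF assms])
  also have "\<dots> = monomial_fun (\<alpha> \<circ> inv \<sigma>) x"
    unfolding monomial_fun_def
    using prod.reindex_bij_betw[OF permutes_imp_bij[OF assms], of "\<lambda>i. (x $ i) ^ (\<alpha> \<circ> inv \<sigma>) i"]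
    by simp
  finally show ?thesis .
qed

lemma monomial_fun_inject:
  assumes "(monomial_fun \<alpha> :: 'a::field_char_0 ^ 'n::finite \<Rightarrow> 'a) = monomial_fun \<beta>"
  shows "\<alpha> = \<beta>"
proof
  fix i
  define x :: "'a ^ 'n" where "x = (\<chi> l. if l = i then 2 else 1)"
  have at_x: "monomial_fun \<gamma> x = 2 ^ \<gamma> i" for \<gamma>
    by (simp add: monomial_fun_def x_def if_distrib[of "\<lambda>c. c ^ _"] cong: if_cong)
  have "(of_nat (2 ^ \<alpha> i) :: 'a) = of_nat (2 ^ \<beta> i)"
    using at_x[of \<alpha>] at_x[of \<beta>] assms by simp
  then have "(2::nat) ^ \<alpha> i = 2 ^ \<beta> i"
    by (simp only: of_nat_eq_iff)
  then show "\<alpha> i = \<beta> i"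
    by simp
qed

lemma linear_form_vanishes_on_torus:
  fixes a :: "'n::finite \<Rightarrow> 'a::field_char_0"
  assumes "a j \<noteq> 0" "a k \<noteq> 0" "j \<noteq> k"
  obtains x :: "'a ^ 'n" where "\<forall>l. x $ l \<noteq> 0" and "(\<Sum>l\<in>UNIV. a l * x $ l) = 0"
proof -
  define s where "s = (\<Sum>l\<in>UNIV - {j} - {k}. a l)"
  obtain t :: 'a where t: "t \<noteq> 0" "a k * t + s \<noteq> 0"
  proof (cases "a k + s = 0")
    case True
    then have "a k * 2 + s \<noteq> 0"
      using assms(2) by (metis add.assoc add.right_neutral mult_2_right)
    then show ?thesis by (intro that[of 2]) simp_all
  qed (intro that[of 1]; simp)
  define x :: "'a ^ 'n" where
    "x = (\<chi> l. if l = j then - (a k * t + s) / a j else if l = k then t else 1)"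
  have "(\<Sum>l\<in>UNIV. a l * x $ l) = a j * x $ j + a k * x $ k + (\<Sum>l\<in>UNIV - {j} - {k}. a l * x $ l)"
    using assms(3) by (simp add: sum.remove[of _ j] sum.remove[of _ k] add.assoc)
  also have "\<dots> = 0"
    using assms by (simp add: x_def s_def)
  finally show ?thesis
    by (rule that[rotated]) (use t assms in \<open>simp add: x_def neg_eq_iff_add_eq_0\<close>)
qed

lemma invariant_group_row_single_nonzero:
  fixes A :: "'a::field_char_0 ^ 'n::finite ^ 'n"
  assumes pos: "\<forall>i. \<alpha> i \<ge> 1" and A: "A \<in> invariant_group \<alpha>"
    and "A $ i $ j \<noteq> 0" "A $ i $ k \<noteq> 0"
  shows "j = k"
proof (rule ccontr)
  assume "j \<noteq> k"
  then obtain x :: "'a ^ 'n" where torus: "\<forall>l. x $ l \<noteq> 0" and "(\<Sum>l\<in>UNIV. A $ i $ l * x $ l) = 0"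
    using linear_form_vanishes_on_torus[of "\<lambda>l. A $ i $ l"] assms(3,4) by blast
  then have "(A *v x) $ i = 0"
    by (simp add: matrix_vector_mult_def)
  then have "monomial_fun \<alpha> (A *v x) = 0"
    using monomial_fun_eq_0_iff[OF pos] by blast
  moreover have "monomial_fun \<alpha> (A *v x) = monomial_fun \<alpha> x"
    using A by (simp add: invariant_group_def)
  ultimately show False
    using torus monomial_fun_eq_0_iff[OF pos, of x] by auto
qed

lemma invariant_group_decomposition:
  fixes A :: "'a::field_char_0 ^ 'n::finite ^ 'n"
  assumes pos: "\<forall>i. \<alpha> i \<ge> 1" and A: "A \<in> invariant_group \<alpha>"
  obtains l \<sigma> where "A = diag_mat l ** perm_mat \<sigma>"
    and "diag_mat l \<in> diag_generators \<alpha>" and "(perm_mat \<sigma> :: 'a ^ 'n ^ 'n) \<in> perm_generators \<alpha>"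
proof -
  have inv: "invertible A" and m: "\<And>x. monomial_fun \<alpha> (A *v x) = monomial_fun \<alpha> x"
    using A by (auto simp: invariant_group_def)
  obtain \<sigma> where \<sigma>: "\<And>i. A $ i $ \<sigma> i \<noteq> 0"
    using invertible_row_nonzero[OF inv] by metis
  have off_\<sigma>: "A $ i $ j = 0" if "j \<noteq> \<sigma> i" for i j
    using invariant_group_row_single_nonzero[OF pos A _ \<sigma>] that by blast
  have "surj \<sigma>"
    by (metis invertible_column_nonzero[OF inv] off_\<sigma> surjI)
  then have perm: "\<sigma> permutes UNIV"
    by (intro bij_imp_permutes) (auto simp: bij_def finite_UNIV_surj_inj)
  define l where "l i = A $ i $ \<sigma> i" for i
  have A_eq: "A = diag_mat l ** perm_mat \<sigma>"
    unfolding l_def by (rule eq_diag_mat_mult_perm_mat) (use off_\<sigma> in blast)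
  have m_A: "monomial_fun \<alpha> (A *v x) = (\<Prod>i\<in>UNIV. l i ^ \<alpha> i) * monomial_fun (\<alpha> \<circ> inv \<sigma>) x" for x
    by (simp add: A_eq monomial_fun_diag_mat monomial_fun_perm_mat[OF perm]
        flip: matrix_vector_mul_assoc)
  have l: "(\<Prod>i\<in>UNIV. l i ^ \<alpha> i) = 1"
    using m_A[of 1] m[of 1] by (simp add: monomial_fun_1)
  with m_A m have "monomial_fun (\<alpha> \<circ> inv \<sigma>) = (monomial_fun \<alpha> :: 'a ^ 'n \<Rightarrow> 'a)"
    by auto
  then have "\<alpha> \<circ> inv \<sigma> = \<alpha>"
    by (rule monomial_fun_inject)
  then have "\<alpha> i = \<alpha> (\<sigma> i)" for i
    by (metis comp_apply permutes_inverses(2)[OF perm])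
  with l perm show ?thesis
    by (intro that[OF A_eq]) (auto simp: diag_generators_def perm_generators_def)
qed

lemma generated_group_least:
  assumes "mat 1 \<in> G" and "S \<subseteq> G"
    and "\<And>A B. A \<in> G \<Longrightarrow> B \<in> G \<Longrightarrow> A ** B \<in> G"
    and "\<And>A. A \<in> G \<Longrightarrow> matrix_inv A \<in> G"
  shows "generated_group S \<subseteq> G"
proof
  fix A
  assume "A \<in> generated_group S"
  then show "A \<in> G"
    by induction (use assms in auto)
qed

lemma mat_1_in_invariant_group: "mat 1 \<in> invariant_group \<alpha>"
  by (auto simp: invariant_group_def invertible_def)

lemma invariant_group_mult:
  assumes "A \<in> invariant_group \<alpha>" "B \<in> invariant_group \<alpha>"
  shows "A ** B \<in> invariant_group \<alpha>"
  using assms by (auto simp: invariant_group_def invertible_mult simp flip: matrix_vector_mul_assoc)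

lemma invariant_group_matrix_inv:
  assumes "A \<in> invariant_group \<alpha>"
  shows "matrix_inv A \<in> invariant_group \<alpha>"
proof -
  have inv: "invertible A" and m: "\<And>x. monomial_fun \<alpha> (A *v x) = monomial_fun \<alpha> x"
    using assms by (auto simp: invariant_group_def)
  have "monomial_fun \<alpha> (matrix_inv A *v x) = monomial_fun \<alpha> x" for x
    using m[of "matrix_inv A *v x"] by (simp add: matrix_vector_mul_assoc matrix_inv_inverse(1)[OF inv])
  then show ?thesis
    by (simp add: invariant_group_def invertible_matrix_inv[OF inv])
qed

lemma diag_generators_subset_invariant_group:
  fixes \<alpha> :: "'n::finite \<Rightarrow> nat"
  assumes pos: "\<forall>i. \<alpha> i \<ge> 1"
  shows "(diag_generators \<alpha> :: ('a::field ^ 'n ^ 'n) set) \<subseteq> invariant_group \<alpha>"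
proof
  fix A :: "'a ^ 'n ^ 'n"
  assume "A \<in> diag_generators \<alpha>"
  then obtain l where A: "A = diag_mat l" and l: "(\<Prod>i\<in>UNIV. l i ^ \<alpha> i) = 1"
    by (auto simp: diag_generators_def)
  have "l i \<noteq> 0" for i
    using l monomial_fun_eq_0_iff[OF pos, of "\<chi> i. l i"] by (auto simp: monomial_fun_def)
  then show "A \<in> invariant_group \<alpha>"
    by (simp add: invariant_group_def A invertible_diag_mat monomial_fun_diag_mat l)
qed

lemma perm_generators_subset_invariant_group:
  fixes \<alpha> :: "'n::finite \<Rightarrow> nat"
  shows "(perm_generators \<alpha> :: ('a::field ^ 'n ^ 'n) set) \<subseteq> invariant_group \<alpha>"
proof
  fix A :: "'a ^ 'n ^ 'n"
  assume "A \<in> perm_generators \<alpha>"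
  then obtain \<sigma> where A: "A = perm_mat \<sigma>" and perm: "\<sigma> permutes UNIV" and "\<forall>i. \<alpha> i = \<alpha> (\<sigma> i)"
    by (auto simp: perm_generators_def)
  then have "\<alpha> \<circ> inv \<sigma> = \<alpha>"
    by (metis comp_apply permutes_inverses(1) ext)
  then show "A \<in> invariant_group \<alpha>"
    by (simp add: invariant_group_def A invertible_perm_mat[OF perm] monomial_fun_perm_mat[OF perm])
qed

theorem lemma4:
  fixes \<alpha> :: "'n::finite \<Rightarrow> nat"
  assumes "\<forall>i. \<alpha> i \<ge> 1"
  shows "(invariant_group \<alpha> :: ('a::field_char_0 ^ 'n ^ 'n) set)
           = generated_group (diag_generators \<alpha> \<union> perm_generators \<alpha>)"
proof
  show "generated_group (diag_generators \<alpha> \<union> perm_generators \<alpha>)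
          \<subseteq> (invariant_group \<alpha> :: ('a ^ 'n ^ 'n) set)"
    using diag_generators_subset_invariant_group[OF assms] perm_generators_subset_invariant_group
    by (intro generated_group_least)
      (auto intro: mat_1_in_invariant_group invariant_group_mult invariant_group_matrix_inv)
next
  show "(invariant_group \<alpha> :: ('a ^ 'n ^ 'n) set)
          \<subseteq> generated_group (diag_generators \<alpha> \<union> perm_generators \<alpha>)"
  proof
    fix A :: "'a ^ 'n ^ 'n"
    assume "A \<in> invariant_group \<alpha>"
    then obtain l \<sigma> where A: "A = diag_mat l ** perm_mat \<sigma>"
      and "diag_mat l \<in> diag_generators \<alpha>" "(perm_mat \<sigma> :: 'a ^ 'n ^ 'n) \<in> perm_generators \<alpha>"
      using invariant_group_decomposition[OF assms] by blast
    then show "A \<in> generated_group (diag_generators \<alpha> \<union> perm_generators \<alpha>)"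
      by (simp add: generated_group.gen_mult generated_group.gen_base)
  qed
qed

end
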